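(* On every instance with largeness ratio $\theta$, the set $\chi_k$ of winners selected by the Oracle Mechanism satisfies $F(\chi_k)\ge(\tfrac12-\theta)F^\star$; i.e., the Oracle Mechanism has approximation ratio at least $\tfrac12-\theta$.
   Context: Sellers $S=\{1,\dots,n\}$ each own one indivisible item and have a cost $c_i\ge0$. The buyer's utility is a monotone submodular $F:2^S\to\mathbb R_{\ge0}$, budget $B>0$; $c(T)=\sum_{i\in T}c_i$. $F^\star=\max\{F(T):c(T)\le B\}>0$; the largeness ratio is $\theta=\max_{s}F(\{s\})/F^\star$. Greedy sequence $\chi(F)=\langle x_1,\dots,x_n\rangle$: with $\chi_0=\emptyset$, $\chi_i=\{x_1,\dots,x_i\}$, $x_i$ maximizes $(F(\chi_{i-1}\cup\{s\})-F(\chi_{i-1}))/c_s$ over $s\notin\chi_{i-1}$ (ratio $+\infty$ if $c_s=0$; ties arbitrary); $\partial_i=F(\chi_i)-F(\chi_{i-1})$. Oracle Mechanism (on the costs): compute $F^\star$, construct $\chi(F)$, let $k$ be the largest integer with $F(\chi_k)\le F^\star/2$, and declare $\chi_k$ the set of winners; each winner $x_j$ is paid $2r_{x_j}\partial_j$, where $r_s=B/F^\star_s$ and $F^\star_s$ is the optimum with seller $s$ removed. *)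

theory Defs
  imports Main "HOL-Library.Extended_Real"
begin

definition monotone_set_fn :: "'a set \<Rightarrow> ('a set \<Rightarrow> real) \<Rightarrow> bool" where
  "monotone_set_fn S F \<longleftrightarrow> (\<forall>A B. A \<subseteq> B \<and> B \<subseteq> S \<longrightarrow> F A \<le> F B)"

definition submodular_set_fn :: "'a set \<Rightarrow> ('a set \<Rightarrow> real) \<Rightarrow> bool" where
  "submodular_set_fn S F \<longleftrightarrow>
     (\<forall>A B. A \<subseteq> S \<and> B \<subseteq> S \<longrightarrow> F (A \<union> B) + F (A \<inter> B) \<le> F A + F B)"

definition opt_value :: "'a set \<Rightarrow> ('a \<Rightarrow> real) \<Rightarrow> ('a set \<Rightarrow> real) \<Rightarrow> real \<Rightarrow> real" where
  "opt_value S c F B = Max (F ` {T. T \<subseteq> S \<and> sum c T \<le> B})"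

definition largeness_ratio :: "'a set \<Rightarrow> ('a \<Rightarrow> real) \<Rightarrow> ('a set \<Rightarrow> real) \<Rightarrow> real \<Rightarrow> real" where
  "largeness_ratio S c F B = Max ((\<lambda>s. F {s} / opt_value S c F B) ` S)"

definition greedy_ratio :: "('a \<Rightarrow> real) \<Rightarrow> ('a set \<Rightarrow> real) \<Rightarrow> 'a set \<Rightarrow> 'a \<Rightarrow> ereal" where
  "greedy_ratio c F T s =
     (if c s = 0 then \<infinity> else ereal ((F (T \<union> {s}) - F T) / c s))"

text \<open>xs is a greedy sequence chi(F) (ties broken arbitrarily):
  x_(i+1) = xs ! i maximizes the greedy ratio w.r.t. chi_i = set (take i xs).\<close>
definition greedy_sequence :: "'a set \<Rightarrow> ('a \<Rightarrow> real) \<Rightarrow> ('a set \<Rightarrow> real) \<Rightarrow> 'a list \<Rightarrow> bool" where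
  "greedy_sequence S c F xs \<longleftrightarrow> distinct xs \<and> set xs = S \<and>
     (\<forall>i < length xs. \<forall>s \<in> S - set (take i xs).
        greedy_ratio c F (set (take i xs)) s \<le> greedy_ratio c F (set (take i xs)) (xs ! i))"

end

theory Submission
  imports Defs
begin

text \<open>Since the whole ground set has value at least \<open>F\<^sup>*\<close>, the winner set \<open>\<chi>\<^sub>k\<close> is a proper
  prefix, and adding the next greedy element \<open>x\<close> pushes the value above \<open>F\<^sup>*/2\<close>. By
  submodularity with \<open>F {} = 0\<close>, that element adds at most \<open>F {x} \<le> \<theta> F\<^sup>*\<close>, so
  \<open>F(\<chi>\<^sub>k) > F\<^sup>*/2 - \<theta> F\<^sup>*\<close>.\<close>

lemma opt_value_attained:
  assumes "finite S" and "B \<ge> 0"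
  obtains T where "T \<subseteq> S" "sum c T \<le> B" "opt_value S c F B = F T"
proof -
  have "finite {T. T \<subseteq> S \<and> sum c T \<le> B}"
    by (rule finite_subset[of _ "Pow S"]) (use assms(1) in auto)
  moreover have "{} \<in> {T. T \<subseteq> S \<and> sum c T \<le> B}"
    using assms(2) by simp
  ultimately have "opt_value S c F B \<in> F ` {T. T \<subseteq> S \<and> sum c T \<le> B}"
    unfolding opt_value_def by (intro Max_in) auto
  with that show ?thesis by blast
qed

lemma opt_value_le_ground:
  assumes "finite S" and "B \<ge> 0" and "monotone_set_fn S F"
  shows "opt_value S c F B \<le> F S"
proof -
  obtain T where "T \<subseteq> S" "opt_value S c F B = F T"
    using opt_value_attained[OF assms(1,2)] by metis
  with assms(3) show ?thesis
    unfolding monotone_set_fn_def by auto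
qed

lemma singleton_le_largeness_ratio:
  assumes "finite S" and "s \<in> S" and "opt_value S c F B > 0"
  shows "F {s} \<le> largeness_ratio S c F B * opt_value S c F B"
proof -
  have "F {s} / opt_value S c F B \<le> largeness_ratio S c F B"
    unfolding largeness_ratio_def using assms(1,2) by (intro Max_ge) auto
  with assms(3) show ?thesis
    by (simp add: divide_le_eq)
qed

lemma submodular_insert_le:
  assumes "submodular_set_fn S F" and "F {} = 0"
    and "A \<subseteq> S" and "x \<in> S" and "x \<notin> A"
  shows "F (insert x A) \<le> F A + F {x}"
proof -
  have "F (A \<union> {x}) + F (A \<inter> {x}) \<le> F A + F {x}"
    using assms(1,3,4) unfolding submodular_set_fn_def by blast
  moreover have "A \<inter> {x} = {}"
    using assms(5) by blast
  ultimately show ?thesis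
    using assms(2) by simp
qed

lemma greedy_sequence_enumerates:
  assumes "greedy_sequence S c F xs"
  shows "distinct xs" and "set xs = S" and "length xs = card S"
  using assms distinct_card unfolding greedy_sequence_def by metis+

theorem lemma17:
  fixes n :: nat and c :: "nat \<Rightarrow> real" and F :: "nat set \<Rightarrow> real" and B :: real
    and xs :: "nat list" and k :: nat
  assumes cost_nonneg: "\<forall>i \<in> {1..n}. c i \<ge> 0"
    and F_nonneg: "\<forall>T. T \<subseteq> {1..n} \<longrightarrow> F T \<ge> 0"
    and F_empty: "F {} = 0"
    and F_mono: "monotone_set_fn {1..n} F"
    and F_submod: "submodular_set_fn {1..n} F"
    and B_pos: "B > 0"
    and opt_pos: "opt_value {1..n} c F B > 0"
    and greedy: "greedy_sequence {1..n} c F xs"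
    and k_le: "k \<le> n"
    and k_ok: "F (set (take k xs)) \<le> opt_value {1..n} c F B / 2"
    and k_max: "\<forall>j. k < j \<and> j \<le> n \<longrightarrow> F (set (take j xs)) > opt_value {1..n} c F B / 2"
  shows "F (set (take k xs)) \<ge> (1/2 - largeness_ratio {1..n} c F B) * opt_value {1..n} c F B"
proof -
  let ?opt = "opt_value {1..n} c F B" and ?A = "set (take k xs)" and ?x = "xs ! k"
  note enum = greedy_sequence_enumerates[OF greedy]
  have "k \<noteq> n"
    using k_ok opt_pos opt_value_le_ground[OF _ _ F_mono, where c = c and B = B] B_pos enum(2,3) by auto
  with k_le enum(3) have k_less: "k < length xs" by simp
  then have take_Suc: "set (take (Suc k) xs) = insert ?x ?A"
    by (simp add: take_Suc_conv_app_nth)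
  have "distinct (take (Suc k) xs)"
    using enum(1) by simp
  then have x: "?x \<in> {1..n}" "?x \<notin> ?A"
    using k_less enum(2) nth_mem[OF k_less] by (auto simp: take_Suc_conv_app_nth)
  have "?opt / 2 < F (insert ?x ?A)"
    using k_max k_less enum(3) take_Suc by auto
  also have "\<dots> \<le> F ?A + F {?x}"
    using submodular_insert_le[OF F_submod F_empty _ x] set_take_subset enum(2) by metis
  also have "F {?x} \<le> largeness_ratio {1..n} c F B * ?opt"
    using singleton_le_largeness_ratio[OF _ x(1) opt_pos] by simp
  finally show ?thesis
    by (simp add: algebra_simps)
qed

end
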